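(* There exists an absolute constant $C>0$ such that the following holds. Let $\mathcal J$ be a joint distribution of $(p_1,p_2,y)\in[0,1]\times[0,1]\times\{0,1\}$, let $\mathcal D_1$ be the distribution of $(p_1,y)$ and $\mathcal D_2$ the distribution of $(p_2,y)$. Then $$|\mathsf{SCDL}(\mathcal D_1)^2-\mathsf{SCDL}(\mathcal D_2)^2|\le C\,\mathbb E_{\mathcal J}|p_1-p_2|\quad\text{and}\quad |\mathsf{SCDL}(\mathcal D_1)-\mathsf{SCDL}(\mathcal D_2)|\le C\sqrt{\mathbb E_{\mathcal J}|p_1-p_2|}.$$
   Context: For $x\in\mathbb R$ write $x_+=\max\{x,0\}$. For a distribution $\mathcal D$ of $(p,y)\in[0,1]\times\{0,1\}$, a positive integer $m$ and $i\in\{0,\ldots,m\}$, let $w_i(p)=(1-|mp-i|)_+$, $\pi_i=\mathbb E_{\mathcal D}[w_i(p)]$ and $q_i=\mathbb E_{\mathcal D}[w_i(p)y]/\pi_i$ (terms with $\pi_i=0$ are $0$). These are the bin weights and bin conditional means after randomly rounding $p$ to a neighbouring multiple $p'$ of $1/m$ with $\Pr[p'=i/m\mid p]=w_i(p)$. Define $$\mathsf{SCDL}_m(\mathcal D)=\max_{i=0,\ldots,m}\Big(\sum_{j=0}^{i}\pi_j\big(q_j-\tfrac{i+1}{m}\big)_+ +\sum_{j=i+1}^{m}\pi_j\big(\tfrac im-q_j\big)_+\Big),\quad \mathsf{SCDL}(\mathcal D)=\inf_{m\in\{2^1,2^2,\ldots\}}\max\{\mathsf{SCDL}_m(\mathcal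 D),1/m\}.$$ *)

theory Defs
  imports "HOL-Probability.Probability"
begin

text \<open>A distribution D of (p,y) in [0,1] x {0,1} is a measure on real x bool
  (product of Borel and discrete sigma-algebras); y is encoded as a bool.\<close>

definition pospart :: "real \<Rightarrow> real" where
  "pospart x = max x 0"

definition rwt :: "nat \<Rightarrow> nat \<Rightarrow> real \<Rightarrow> real" where
  "rwt m i p = pospart (1 - \<bar>real m * p - real i\<bar>)"

definition bin_weight :: "(real \<times> bool) measure \<Rightarrow> nat \<Rightarrow> nat \<Rightarrow> real" where
  "bin_weight D m i = (\<integral>z. rwt m i (fst z) \<partial>D)"

definition bin_mean :: "(real \<times> bool) measure \<Rightarrow> nat \<Rightarrow> nat \<Rightarrow> real" where
  "bin_mean D m i = (if bin_weight D m i = 0 then 0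
      else (\<integral>z. rwt m i (fst z) * (if snd z then 1 else 0) \<partial>D) / bin_weight D m i)"

definition SCDL_m :: "(real \<times> bool) measure \<Rightarrow> nat \<Rightarrow> real" where
  "SCDL_m D m = Max ((\<lambda>i.
      (\<Sum>j\<in>{0..i}. bin_weight D m j * pospart (bin_mean D m j - real (i + 1) / real m))
    + (\<Sum>j\<in>{i+1..m}. bin_weight D m j * pospart (real i / real m - bin_mean D m j))) ` {0..m})"

definition SCDL :: "(real \<times> bool) measure \<Rightarrow> real" where
  "SCDL D = (INF k\<in>{1::nat..}. max (SCDL_m D (2 ^ k)) (1 / 2 ^ k))"

end

(*
  Write SCDL D = inf_k max (b_k, 2^-k) with b_k = SCDL_{2^k} D. The sequence b_k is
  nondecreasing: a tent of width 1/m is a combination of three tents of width 1/(2m), so every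
  cut at level m is dominated by the average of two cuts at level 2m. And it is Lipschitz in the
  predictions at scale 2^k: under a coupling, each bin weight moves by at most 2^k |p1 - p2|, so
  b_k(D1) <= b_k(D2) + 8 * 2^k * E. For any nondecreasing bounded b, such a perturbation changes
  the square of the infimum by O(E): if the infimum is at least sqrt E, it is attained at some
  k with 2^k of the order of its inverse, and the perturbation costs O(E / SCDL); otherwise take
  2^-k close to sqrt E, where both terms are O(sqrt E).
*)

theory Submission
  imports Defs
begin

section \<open>Infima of the form inf k. max (b k) (1 / 2 ^ k)\<close>

lemma ex_inverse_power_bracket:
  fixes r x :: real
  assumes "1 < r" "0 < x" "x \<le> 1 / r"
  shows "\<exists>n\<ge>1. 1 / r ^ Suc n < x \<and> x \<le> 1 / r ^ n"
proof -
  obtain N where "(1 / r) ^ N < x"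
    using real_arch_pow_inv[OF \<open>0 < x\<close>, of "1 / r"] assms(1) by auto
  moreover have "(1 / r) ^ Suc N \<le> (1 / r) ^ N"
    using assms(1) by (intro power_decreasing) auto
  ultimately have ex: "\<exists>n. 1 / r ^ Suc n < x"
    by (metis order.strict_trans1 power_one_over)
  define n where "n = (LEAST n. 1 / r ^ Suc n < x)"
  have below: "1 / r ^ Suc n < x" unfolding n_def by (rule LeastI_ex[OF ex])
  have "n \<noteq> 0" using below assms(3) by (intro notI) simp
  moreover have "x \<le> 1 / r ^ n"
    using not_less_Least[of "n - 1" "\<lambda>n. 1 / r ^ Suc n < x"] \<open>n \<noteq> 0\<close>
    unfolding n_def[symmetric] by (simp add: not_less)
  ultimately show ?thesis using below by (intro exI[of _ n]) auto
qed

definition dyadic_inf :: "(nat \<Rightarrow> real) \<Rightarrow> real" where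
  "dyadic_inf b = (INF k\<in>{1..}. max (b k) (1 / 2 ^ k))"

lemma dyadic_inf_le: "1 \<le> k \<Longrightarrow> dyadic_inf b \<le> max (b k) (1 / 2 ^ k)"
  unfolding dyadic_inf_def
  by (rule cINF_lower) (auto intro!: bdd_belowI[of _ 0] simp: le_max_iff_disj)

lemma le_dyadic_inf: "(\<And>k. 1 \<le> k \<Longrightarrow> c \<le> max (b k) (1 / 2 ^ k)) \<Longrightarrow> c \<le> dyadic_inf b"
  unfolding dyadic_inf_def by (rule cINF_greatest) auto

lemma dyadic_inf_nonneg: "0 \<le> dyadic_inf b"
  by (rule le_dyadic_inf) (simp add: le_max_iff_disj)

lemma inverse_pow2_le: "k \<le> n \<Longrightarrow> 1 / 2 ^ n \<le> (1 / 2 ^ k :: real)"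
  by (simp add: field_simps power_increasing)

lemma dyadic_inf_le_inverse_pow2D:
  assumes "mono b" "1 \<le> k" "dyadic_inf b \<le> 1 / 2 ^ k"
  shows "b k \<le> 1 / 2 ^ k"
proof (rule ccontr)
  assume "\<not> b k \<le> 1 / 2 ^ k"
  have "min (1 / 2 ^ (k - 1)) (b k) \<le> dyadic_inf b"
  proof (rule le_dyadic_inf)
    fix k' :: nat assume "1 \<le> k'"
    show "min (1 / 2 ^ (k - 1)) (b k) \<le> max (b k') (1 / 2 ^ k')"
    proof (cases "k' < k")
      case True
      then have "1 / 2 ^ (k - 1) \<le> (1 / 2 ^ k' :: real)" by (intro inverse_pow2_le) auto
      then show ?thesis by (simp add: le_max_iff_disj min_le_iff_disj)
    next
      case False
      then show ?thesis using monoD[OF assms(1), of k k'] by (simp add: le_max_iff_disj min_le_iff_disj)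
    qed
  qed
  moreover have "1 / 2 ^ k < (1 / 2 ^ (k - 1) :: real)"
    using assms(2) by (simp add: field_simps power_strict_increasing)
  ultimately show False using assms(3) \<open>\<not> b k \<le> 1 / 2 ^ k\<close> by linarith
qed

lemma dyadic_inf_attained:
  assumes "mono b" "0 < dyadic_inf b"
  shows "\<exists>j\<ge>1. max (b j) (1 / 2 ^ j) = dyadic_inf b \<and> (j = 1 \<or> 2 ^ j * dyadic_inf b \<le> 2)"
proof (cases "dyadic_inf b \<le> 1 / 2")
  case False
  have "b 1 \<le> dyadic_inf b"
    using monoD[OF assms(1)] by (intro le_dyadic_inf) (simp add: le_max_iff_disj)
  then have "max (b 1) (1 / 2 ^ 1) = dyadic_inf b"
    using dyadic_inf_le[of 1 b] False by simp
  then show ?thesis by blast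
next
  case True
  obtain n where n: "1 \<le> n" "1 / 2 ^ Suc n < dyadic_inf b" "dyadic_inf b \<le> 1 / 2 ^ n"
    using ex_inverse_power_bracket[of 2 "dyadic_inf b"] assms(2) True by auto
  have "min (1 / 2 ^ n) (b (Suc n)) \<le> dyadic_inf b"
  proof (rule le_dyadic_inf)
    fix k :: nat
    show "min (1 / 2 ^ n) (b (Suc n)) \<le> max (b k) (1 / 2 ^ k)"
      using inverse_pow2_le[of k n] monoD[OF assms(1), of "Suc n" k]
      by (cases "k \<le> n") (auto simp: le_max_iff_disj min_le_iff_disj)
  qed
  then consider "dyadic_inf b = 1 / 2 ^ n" | "b (Suc n) \<le> dyadic_inf b"
    using n(3) by linarith
  then show ?thesis
  proof cases
    case 1
    moreover have "max (b n) (1 / 2 ^ n) = 1 / 2 ^ n"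
      using dyadic_inf_le_inverse_pow2D[OF assms(1) n(1)] 1 by simp
    ultimately show ?thesis using n(1) by (intro exI[of _ n]) simp
  next
    case 2
    then have "max (b (Suc n)) (1 / 2 ^ Suc n) = dyadic_inf b"
      using dyadic_inf_le[of "Suc n" b] n(2) by simp
    moreover have "2 ^ Suc n * dyadic_inf b \<le> 2"
      using n(3) by (simp add: field_simps)
    ultimately show ?thesis by (intro exI[of _ "Suc n"]) simp
  qed
qed

lemma dyadic_inf_le_perturbed:
  assumes "\<And>k. a k \<le> b k + L * 2 ^ k * e" "0 \<le> L" "0 \<le> e" "1 \<le> k"
  shows "dyadic_inf a \<le> max (b k) (1 / 2 ^ k) + L * 2 ^ k * e"
proof -
  have "0 \<le> L * 2 ^ k * e" using assms(2,3) by simp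
  then have "max (a k) (1 / 2 ^ k) \<le> max (b k) (1 / 2 ^ k) + L * 2 ^ k * e"
    using assms(1)[of k] by (simp add: max_def)
  then show ?thesis using dyadic_inf_le[OF assms(4), of a] by linarith
qed

lemma dyadic_inf_square_le_below_scale:
  assumes "mono b" and a: "\<And>k. a k \<le> b k + L * 2 ^ k * e" and "0 \<le> L" "0 < e"
    and k: "1 \<le> k" "dyadic_inf b \<le> 1 / 2 ^ k" "1 \<le> 4 ^ k * e" "4 ^ k * e \<le> 4"
  shows "(dyadic_inf a)\<^sup>2 \<le> (2 + 8 * L\<^sup>2) * e"
proof -
  define x :: real where "x = 2 ^ k"
  have x: "0 < x" "1 \<le> x\<^sup>2 * e" "x\<^sup>2 * e \<le> 4"
    using k(3,4) unfolding x_def by (simp_all flip: power_mult_distrib add: power2_eq_square)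
  have "b k \<le> 1 / x"
    unfolding x_def using dyadic_inf_le_inverse_pow2D[OF assms(1) k(1,2)] .
  then have "dyadic_inf a \<le> 1 / x + L * x * e"
    using dyadic_inf_le_perturbed[OF a assms(3) _ k(1)] assms(4) by (simp add: x_def)
  then have "(dyadic_inf a)\<^sup>2 \<le> (1 / x + L * x * e)\<^sup>2"
    using dyadic_inf_nonneg by (simp add: power_mono)
  also have "\<dots> \<le> 2 * (1 / x)\<^sup>2 + 2 * (L * x * e)\<^sup>2"
    using zero_le_power2[of "1 / x - L * x * e"] by (simp add: power2_eq_square algebra_simps)
  also have "\<dots> = 2 * (1 / (x\<^sup>2 * e)) * e + 2 * L\<^sup>2 * (x\<^sup>2 * e) * e"
    using x(1) assms(4) by (simp add: field_simps power2_eq_square)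
  also have "\<dots> \<le> 2 * 1 * e + 2 * L\<^sup>2 * 4 * e"
    using x assms(4) by (intro add_mono mult_right_mono mult_left_mono) (auto simp: field_simps)
  finally show ?thesis by (simp add: algebra_simps)
qed

lemma pow2_exponent_le:
  fixes \<beta> :: real
  assumes "0 < \<beta>" "1 / 2 ^ k < \<beta>" "2 ^ j * \<beta> \<le> 2"
  shows "j \<le> k"
proof -
  have "2 < 2 ^ Suc k * \<beta>" using assms(2) by (simp add: field_simps)
  then have "2 ^ j * \<beta> < 2 ^ Suc k * \<beta>" using assms(3) by linarith
  then have "(2::real) ^ j < 2 ^ Suc k" using assms(1) by (simp add: mult_less_cancel_right)
  then show ?thesis using power_less_imp_less_exp[of "2::real" j "Suc k"] by simp
qed

lemma dyadic_inf_square_le_above_scale: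
  assumes b: "mono b" "\<And>k. b k \<le> B" "0 \<le> B"
    and a: "\<And>k. a k \<le> b k + L * 2 ^ k * e" and "0 \<le> L" "0 \<le> e" "e \<le> 1"
    and k: "1 / 2 ^ k < dyadic_inf b" "4 ^ k * e \<le> 4"
  shows "(dyadic_inf a)\<^sup>2 \<le> (dyadic_inf b)\<^sup>2 + (4 * L * (1 + B) + 4 * L\<^sup>2) * e"
proof -
  define \<beta> where "\<beta> = dyadic_inf b"
  have "0 < (1::real) / 2 ^ k" by simp
  then have "0 < \<beta>" using k(1) unfolding \<beta>_def by linarith
  then obtain j where j: "1 \<le> j" "max (b j) (1 / 2 ^ j) = \<beta>" "j = 1 \<or> 2 ^ j * \<beta> \<le> 2"
    using dyadic_inf_attained[OF b(1)] unfolding \<beta>_def by blast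
  define y :: real where "y = 2 ^ j"
  have "(1::real) / 2 ^ j \<le> 1" by simp
  then have "\<beta> \<le> 1 + B"
    unfolding j(2)[symmetric] using b(2)[of j] b(3) by (intro max.boundedI) linarith+
  then have y\<beta>: "y * \<beta> \<le> 2 * (1 + B)" using j(3) b(3) by (auto simp: y_def)
  have "y\<^sup>2 * e \<le> 4"
  proof (cases "j = 1")
    case True
    then show ?thesis using assms(7) by (simp add: y_def)
  next
    case False
    then have "j \<le> k" using pow2_exponent_le[OF \<open>0 < \<beta>\<close>] k(1) j(3) unfolding \<beta>_def by blast
    then have "y\<^sup>2 \<le> 4 ^ k"
      by (simp add: y_def power_increasing flip: power_mult_distrib add: power2_eq_square)
    then show ?thesis using k(2) assms(6) by (meson mult_right_mono order_trans)
  qed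
  have "dyadic_inf a \<le> \<beta> + L * y * e"
    using dyadic_inf_le_perturbed[OF a assms(5,6) j(1)] j(2) by (simp add: y_def \<beta>_def)
  then have "(dyadic_inf a)\<^sup>2 \<le> (\<beta> + L * y * e)\<^sup>2"
    using dyadic_inf_nonneg by (simp add: power_mono)
  also have "\<dots> = \<beta>\<^sup>2 + 2 * L * e * (y * \<beta>) + L\<^sup>2 * e * (y\<^sup>2 * e)"
    by (simp add: power2_eq_square algebra_simps)
  also have "\<dots> \<le> \<beta>\<^sup>2 + 2 * L * e * (2 * (1 + B)) + L\<^sup>2 * e * 4"
    using y\<beta> \<open>y\<^sup>2 * e \<le> 4\<close> assms(5,6) by (intro add_mono mult_left_mono) auto
  finally show ?thesis unfolding \<beta>_def by (simp add: algebra_simps)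
qed

lemma dyadic_inf_square_le:
  assumes b: "mono b" "\<And>k. b k \<le> B" "0 \<le> B"
    and a: "\<And>k. a k \<le> b k + L * 2 ^ k * e" and L: "0 \<le> L" and e: "0 \<le> e" "e \<le> 1"
  shows "(dyadic_inf a)\<^sup>2 \<le> (dyadic_inf b)\<^sup>2 + (2 + 4 * L * (1 + B) + 8 * L\<^sup>2) * e"
proof (cases "e = 0")
  case True
  then have "dyadic_inf a \<le> dyadic_inf b"
    using dyadic_inf_le_perturbed[OF a L e(1)] by (intro le_dyadic_inf) simp
  then show ?thesis using True dyadic_inf_nonneg[of a] by (simp add: power_mono)
next
  case False
  then obtain k where k: "1 \<le> k" "1 / 4 ^ Suc k < e / 4" "e / 4 \<le> 1 / 4 ^ k"
    using ex_inverse_power_bracket[of 4 "e / 4"] e by auto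
  then have scale: "1 \<le> 4 ^ k * e" "4 ^ k * e \<le> 4" by (simp_all add: field_simps)
  have split: "(2 + 4 * L * (1 + B) + 8 * L\<^sup>2) * e = (2 + 8 * L\<^sup>2) * e + 4 * L * (1 + B) * e"
    "(2 + 4 * L * (1 + B) + 8 * L\<^sup>2) * e = (4 * L * (1 + B) + 4 * L\<^sup>2) * e + (2 + 4 * L\<^sup>2) * e"
    by (simp_all add: algebra_simps)
  have nonneg: "0 \<le> 4 * L * (1 + B) * e" "0 \<le> (2 + 4 * L\<^sup>2) * e" "0 \<le> (dyadic_inf b)\<^sup>2"
    using L b(3) e by simp_all
  show ?thesis
  proof (cases "dyadic_inf b \<le> 1 / 2 ^ k")
    case True
    then have "(dyadic_inf a)\<^sup>2 \<le> (2 + 8 * L\<^sup>2) * e"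
      using False e(1) by (intro dyadic_inf_square_le_below_scale[OF b(1) a L _ k(1) _ scale]) auto
    then show ?thesis using nonneg unfolding split(1) by linarith
  next
    case False
    then have "(dyadic_inf a)\<^sup>2 \<le> (dyadic_inf b)\<^sup>2 + (4 * L * (1 + B) + 4 * L\<^sup>2) * e"
      by (intro dyadic_inf_square_le_above_scale[OF b a L e _ scale(2)]) simp
    then show ?thesis using nonneg unfolding split(2) by linarith
  qed
qed

lemma SCDL_eq_dyadic_inf: "SCDL D = dyadic_inf (\<lambda>k. SCDL_m D (2 ^ k))"
  unfolding SCDL_def dyadic_inf_def ..

lemma SCDL_nonneg: "0 \<le> SCDL D"
  unfolding SCDL_eq_dyadic_inf by (rule dyadic_inf_nonneg)

lemma abs_diff_le_sqrt_abs_diff_squares: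
  fixes x y :: real
  assumes "0 \<le> x" "0 \<le> y"
  shows "\<bar>x - y\<bar> \<le> sqrt \<bar>x\<^sup>2 - y\<^sup>2\<bar>"
proof (rule real_le_rsqrt)
  have "\<bar>x - y\<bar> * \<bar>x - y\<bar> \<le> \<bar>x - y\<bar> * (x + y)"
    using assms by (intro mult_left_mono) auto
  also have "\<dots> = \<bar>(x - y) * (x + y)\<bar>"
    using assms by (simp add: abs_mult)
  also have "(x - y) * (x + y) = x\<^sup>2 - y\<^sup>2"
    by (simp add: power2_eq_square algebra_simps)
  finally show "\<bar>x - y\<bar>\<^sup>2 \<le> \<bar>x\<^sup>2 - y\<^sup>2\<bar>" by (simp add: power2_eq_square)
qed

section \<open>Tent functions\<close>

definition tent :: "nat \<Rightarrow> int \<Rightarrow> real \<Rightarrow> real" where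
  "tent m j p = pospart (1 - \<bar>real m * p - of_int j\<bar>)"

lemma rwt_eq_tent: "rwt m i = tent m (int i)"
  by (simp add: fun_eq_iff rwt_def tent_def)

lemma tent_nonneg: "0 \<le> tent m j p"
  by (simp add: tent_def pospart_def)

lemma tent_le_1: "tent m j p \<le> 1"
  by (simp add: tent_def pospart_def)

lemma borel_measurable_tent [measurable]: "tent m j \<in> borel_measurable borel"
  unfolding tent_def pospart_def by (intro borel_measurable_continuous_onI continuous_intros)

lemma tent_lipschitz: "\<bar>tent m j a - tent m j b\<bar> \<le> real m * \<bar>a - b\<bar>"
proof -
  have "\<bar>tent m j a - tent m j b\<bar> \<le> \<bar>real m * a - real m * b\<bar>"
    unfolding tent_def pospart_def by linarith
  then show ?thesis by (simp add: abs_mult flip: right_diff_distrib)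
qed

lemma abs_tent_diff_le_1: "\<bar>tent m j a - tent m j b\<bar> \<le> 1"
  using tent_nonneg[of m j a] tent_le_1[of m j a] tent_nonneg[of m j b] tent_le_1[of m j b]
  by (simp add: abs_le_iff)

lemma tent_support:
  assumes "tent m j p \<noteq> 0"
  shows "j = \<lfloor>real m * p\<rfloor> \<or> j = \<lfloor>real m * p\<rfloor> + 1"
proof -
  have "\<bar>real m * p - of_int j\<bar> < 1"
    using assms by (auto simp: tent_def pospart_def max_def split: if_splits)
  then have "j - 1 \<le> \<lfloor>real m * p\<rfloor>" "\<lfloor>real m * p\<rfloor> \<le> j"
    by (auto simp: le_floor_iff floor_le_iff)
  then show ?thesis by linarith
qed

lemma tent_eq_0_outside:
  assumes "0 \<le> p" "p \<le> 1" "j < 0 \<or> int m < j"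
  shows "tent m j p = 0"
proof -
  have "of_int j \<le> (-1::real) \<or> real m + 1 \<le> of_int j" using assms(3) by linarith
  moreover have "0 \<le> real m * p" "real m * p \<le> real m"
    using assms(1,2) mult_left_le[of p "real m"] by auto
  ultimately have "1 \<le> \<bar>real m * p - of_int j\<bar>" by linarith
  then show ?thesis by (simp add: tent_def pospart_def)
qed

lemma tent_refine:
  "tent m j p = tent (2 * m) (2 * j) p + (tent (2 * m) (2 * j - 1) p + tent (2 * m) (2 * j + 1) p) / 2"
proof -
  have hat: "max (1 - \<bar>u\<bar>) 0
      = max (1 - \<bar>2 * u\<bar>) 0 + (max (1 - \<bar>2 * u + 1\<bar>) 0 + max (1 - \<bar>2 * u - 1\<bar>) 0) / 2"
    for u :: real
    by (simp add: max_def abs_if)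
  define u where "u = real m * p - of_int j"
  have "real (2 * m) * p - of_int (2 * j) = 2 * u"
    and "real (2 * m) * p - of_int (2 * j - 1) = 2 * u + 1"
    and "real (2 * m) * p - of_int (2 * j + 1) = 2 * u - 1"
    unfolding u_def by (simp_all add: algebra_simps)
  then show ?thesis unfolding tent_def pospart_def u_def[symmetric] by (simp only: hat[of u])
qed

lemma sum_le_card_support:
  fixes f :: "'a \<Rightarrow> real" and c :: real
  assumes "finite A" "finite S" "\<And>x. x \<in> A \<Longrightarrow> x \<notin> S \<Longrightarrow> f x = 0"
    and "\<And>x. x \<in> A \<Longrightarrow> f x \<le> c" "0 \<le> c"
  shows "sum f A \<le> real (card S) * c"
proof -
  have "sum f A = sum f (A \<inter> S)"
    using assms(1,3) by (intro sum.mono_neutral_right) auto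
  also have "\<dots> \<le> real (card (A \<inter> S)) * c"
    using assms(4) by (intro sum_bounded_above) auto
  also have "\<dots> \<le> real (card S) * c"
    using card_mono[OF assms(2), of "A \<inter> S"] assms(5) by (intro mult_right_mono) auto
  finally show ?thesis .
qed

lemma sum_tent_le: "(\<Sum>j\<in>{0..m}. tent m (int j) p) \<le> 2"
proof -
  define k where "k = \<lfloor>real m * p\<rfloor>"
  have "(\<Sum>j\<in>{0..m}. tent m (int j) p) \<le> real (card {nat k, nat (k + 1)}) * 1"
  proof (rule sum_le_card_support)
    fix j assume "j \<notin> {nat k, nat (k + 1)}"
    then have "int j \<noteq> k" "int j \<noteq> k + 1" by auto
    then show "tent m (int j) p = 0" using tent_support[of m "int j" p] unfolding k_def by blast
  qed (simp_all add: tent_le_1)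
  also have "\<dots> \<le> 2" by (simp add: card_insert_if)
  finally show ?thesis .
qed

lemma sum_tent_diff_le:
  "(\<Sum>j\<in>{0..m}. \<bar>tent m (int j) a - tent m (int j) b\<bar>) \<le> 4 * real m * \<bar>a - b\<bar>"
proof -
  define k where "k = \<lfloor>real m * a\<rfloor>"
  define l where "l = \<lfloor>real m * b\<rfloor>"
  have "(\<Sum>j\<in>{0..m}. \<bar>tent m (int j) a - tent m (int j) b\<bar>)
      \<le> real (card {nat k, nat (k + 1), nat l, nat (l + 1)}) * (real m * \<bar>a - b\<bar>)"
  proof (rule sum_le_card_support)
    fix j assume "j \<notin> {nat k, nat (k + 1), nat l, nat (l + 1)}"
    then have "int j \<noteq> k" "int j \<noteq> k + 1" "int j \<noteq> l" "int j \<noteq> l + 1" by auto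
    then have "tent m (int j) a = 0" "tent m (int j) b = 0"
      using tent_support[of m "int j" a] tent_support[of m "int j" b] unfolding k_def l_def by blast+
    then show "\<bar>tent m (int j) a - tent m (int j) b\<bar> = 0" by simp
  qed (simp_all add: tent_lipschitz)
  also have "\<dots> \<le> 4 * (real m * \<bar>a - b\<bar>)"
    by (intro mult_right_mono) (auto simp: card_insert_if)
  finally show ?thesis by simp
qed

lemma pospart_mono: "x \<le> y \<Longrightarrow> pospart x \<le> pospart y"
  by (simp add: pospart_def)

lemma pospart_le_add_abs: "pospart x \<le> pospart y + \<bar>x - y\<bar>"
  by (simp add: pospart_def)

lemma pospart_refine_le: "pospart (a + (b + c) / 2) \<le> pospart a + (pospart b + pospart c) / 2"
  by (simp add: pospart_def max_def field_simps)

lemma pospart_neg_refine_le: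
  "pospart (- (a + (b + c) / 2)) \<le> pospart (- a) + (pospart (- b) + pospart (- c)) / 2"
  by (simp add: pospart_def max_def field_simps)

lemma sum_refine_eq:
  fixes f :: "int \<Rightarrow> real"
  assumes "a \<le> b"
  shows "(\<Sum>j\<in>{a..<b}. f (2 * int j) + (f (2 * int j - 1) + f (2 * int j + 1)) / 2)
    = (\<Sum>k\<in>{2 * a..<2 * b}. f (int k)) + (f (2 * int a - 1) - f (2 * int b - 1)) / 2"
  using assms
proof (induction b rule: dec_induct)
  case (step n)
  have "{2 * a..<2 * Suc n} = insert (2 * n + 1) (insert (2 * n) {2 * a..<2 * n})"
    using step.hyps by auto
  then show ?case using step by (simp add: field_simps)
qed simp

lemma sum_split_at: "i \<le> m \<Longrightarrow> sum f {0..i} + sum f {i + 1..m} = sum f {0..m::nat}"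
  using sum.ub_add_nat[of 0 i f "m - i"] by simp

section \<open>Losses of cuts and refinement of bins\<close>

text \<open>\<open>bin_bias D m j t\<close> is \<open>\<pi>\<^sub>j (q\<^sub>j - t)\<close> written without the division in
  \<open>bin_mean\<close>; it is defined for every integer \<open>j\<close>, the bins \<open>j < 0\<close> and \<open>j > m\<close>
  being empty.\<close>

definition bin_bias :: "(real \<times> bool) measure \<Rightarrow> nat \<Rightarrow> int \<Rightarrow> real \<Rightarrow> real" where
  "bin_bias D m j t = (\<integral>z. tent m j (fst z) * (of_bool (snd z) - t) \<partial>D)"

definition lower_loss :: "(real \<times> bool) measure \<Rightarrow> nat \<Rightarrow> nat \<Rightarrow> real \<Rightarrow> real" where
  "lower_loss D m i t = (\<Sum>j\<in>{0..i}. pospart (bin_bias D m (int j) t))"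

definition upper_loss :: "(real \<times> bool) measure \<Rightarrow> nat \<Rightarrow> nat \<Rightarrow> real \<Rightarrow> real" where
  "upper_loss D m i s = (\<Sum>j\<in>{i + 1..m}. pospart (- bin_bias D m (int j) s))"

definition cut_loss :: "(real \<times> bool) measure \<Rightarrow> nat \<Rightarrow> nat \<Rightarrow> real" where
  "cut_loss D m i = lower_loss D m i (real (i + 1) / real m) + upper_loss D m i (real i / real m)"

locale forecast_distr = prob_space D for D :: "(real \<times> bool) measure" +
  assumes sets_D: "sets D = sets (borel \<Otimes>\<^sub>M count_space UNIV)"
    and AE_unit: "AE z in D. fst z \<in> {0..1}"
begin

lemma integrable_tent_mult: "integrable D (\<lambda>z. tent m j (fst z) * h (snd z))"
proof (rule integrable_const_bound[where B = "\<bar>h True\<bar> + \<bar>h False\<bar>"])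
  show "AE z in D. norm (tent m j (fst z) * h (snd z)) \<le> \<bar>h True\<bar> + \<bar>h False\<bar>"
  proof (rule AE_I2)
    fix z :: "real \<times> bool"
    have "\<bar>h (snd z)\<bar> \<le> \<bar>h True\<bar> + \<bar>h False\<bar>" by (cases "snd z") auto
    then have "\<bar>tent m j (fst z)\<bar> * \<bar>h (snd z)\<bar> \<le> 1 * (\<bar>h True\<bar> + \<bar>h False\<bar>)"
      using tent_nonneg tent_le_1 by (intro mult_mono) auto
    then show "norm (tent m j (fst z) * h (snd z)) \<le> \<bar>h True\<bar> + \<bar>h False\<bar>"
      by (simp add: abs_mult)
  qed
  have "(\<lambda>z. tent m j (fst z) * h (snd z)) \<in> borel_measurable (borel \<Otimes>\<^sub>M count_space UNIV)"
    by measurable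
  then show "(\<lambda>z. tent m j (fst z) * h (snd z)) \<in> borel_measurable D"
    using measurable_cong_sets[OF sets_D refl] by blast
qed

lemma bin_bias_eq:
  "bin_bias D m j t = (\<integral>z. tent m j (fst z) * of_bool (snd z) \<partial>D) - t * (\<integral>z. tent m j (fst z) \<partial>D)"
proof -
  have "bin_bias D m j t
      = (\<integral>z. tent m j (fst z) * of_bool (snd z) - t * (tent m j (fst z) * 1) \<partial>D)"
    unfolding bin_bias_def by (simp add: algebra_simps)
  also have "\<dots> = (\<integral>z. tent m j (fst z) * of_bool (snd z) \<partial>D)
      - t * (\<integral>z. tent m j (fst z) * 1 \<partial>D)"
    using integrable_tent_mult[of m j of_bool] integrable_tent_mult[of m j "\<lambda>_. 1"] by simp
  finally show ?thesis by simp
qed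

lemma tent_integral_bounds:
  "0 \<le> (\<integral>z. tent m j (fst z) * of_bool (snd z) \<partial>D)"
  "(\<integral>z. tent m j (fst z) * of_bool (snd z) \<partial>D) \<le> (\<integral>z. tent m j (fst z) \<partial>D)"
  using integrable_tent_mult[of m j of_bool] integrable_tent_mult[of m j "\<lambda>_. 1"]
  by (auto intro!: integral_nonneg_AE integral_mono mult_left_le simp: tent_nonneg)

lemma bin_bias_antimono: "t \<le> t' \<Longrightarrow> bin_bias D m j t' \<le> bin_bias D m j t"
  using tent_integral_bounds[of m j] unfolding bin_bias_eq by (simp add: mult_right_mono)

lemma pospart_bin_bias:
  "bin_weight D m i * pospart (bin_mean D m i - t) = pospart (bin_bias D m (int i) t)"
  "bin_weight D m i * pospart (t - bin_mean D m i) = pospart (- bin_bias D m (int i) t)"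
proof -
  define W where "W = (\<integral>z. tent m (int i) (fst z) \<partial>D)"
  define Y where "Y = (\<integral>z. tent m (int i) (fst z) * of_bool (snd z) \<partial>D)"
  have W: "bin_weight D m i = W" unfolding bin_weight_def W_def rwt_eq_tent ..
  have "bin_mean D m i = (if W = 0 then 0 else Y / W)"
    unfolding bin_mean_def W unfolding Y_def rwt_eq_tent of_bool_def by simp
  moreover have "bin_bias D m (int i) t = Y - t * W"
    unfolding Y_def W_def by (rule bin_bias_eq)
  moreover have "0 \<le> Y" "Y \<le> W"
    unfolding Y_def W_def by (rule tent_integral_bounds)+
  ultimately show "bin_weight D m i * pospart (bin_mean D m i - t) = pospart (bin_bias D m (int i) t)"
    and "bin_weight D m i * pospart (t - bin_mean D m i) = pospart (- bin_bias D m (int i) t)"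
    unfolding W pospart_def by (auto simp: max_mult_distrib_left algebra_simps)
qed

lemma SCDL_m_eq_Max_cut_loss: "SCDL_m D m = Max (cut_loss D m ` {0..m})"
  unfolding SCDL_m_def cut_loss_def lower_loss_def upper_loss_def by (simp add: pospart_bin_bias)

lemma bin_bias_refine:
  "bin_bias D m j t = bin_bias D (2 * m) (2 * j) t
     + (bin_bias D (2 * m) (2 * j - 1) t + bin_bias D (2 * m) (2 * j + 1) t) / 2"
proof -
  let ?f = "\<lambda>k z. tent (2 * m) k (fst z) * (of_bool (snd z) - t)"
  have "bin_bias D m j t = (\<integral>z. ?f (2 * j) z + (?f (2 * j - 1) z + ?f (2 * j + 1) z) / 2 \<partial>D)"
    unfolding bin_bias_def by (subst tent_refine) (simp add: algebra_simps)
  also have "\<dots> = (\<integral>z. ?f (2 * j) z \<partial>D)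
      + ((\<integral>z. ?f (2 * j - 1) z \<partial>D) + (\<integral>z. ?f (2 * j + 1) z \<partial>D)) / 2"
    using integrable_tent_mult[of "2 * m" _ "\<lambda>y. of_bool y - t"] by simp
  finally show ?thesis unfolding bin_bias_def .
qed

lemma bin_bias_eq_0_outside: "j < 0 \<or> int m < j \<Longrightarrow> bin_bias D m j t = 0"
  unfolding bin_bias_def
  by (rule integral_eq_zero_AE) (use AE_unit in \<open>eventually_elim, simp add: tent_eq_0_outside\<close>)

lemma lower_loss_antimono: "t \<le> t' \<Longrightarrow> lower_loss D m i t' \<le> lower_loss D m i t"
  unfolding lower_loss_def by (intro sum_mono pospart_mono bin_bias_antimono)

lemma upper_loss_mono: "s \<le> s' \<Longrightarrow> upper_loss D m i s \<le> upper_loss D m i s'"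
  unfolding upper_loss_def by (intro sum_mono pospart_mono le_imp_neg_le bin_bias_antimono)

lemma lower_loss_le_refined:
  "lower_loss D m i t \<le> (lower_loss D (2 * m) (2 * i) t + lower_loss D (2 * m) (2 * i + 1) t) / 2"
proof -
  define P where "P k = pospart (bin_bias D (2 * m) k t)" for k
  have "P (- 1) = 0"
    using bin_bias_eq_0_outside[of "- 1" "2 * m" t] by (simp add: P_def pospart_def)
  have "lower_loss D m i t
      \<le> (\<Sum>j\<in>{0..<Suc i}. P (2 * int j) + (P (2 * int j - 1) + P (2 * int j + 1)) / 2)"
    unfolding lower_loss_def P_def atLeastLessThanSuc_atLeastAtMost
    by (intro sum_mono) (subst bin_bias_refine, rule pospart_refine_le)
  also have "\<dots> = (\<Sum>k\<in>{0..<Suc (2 * i)}. P (int k)) + P (2 * int i + 1) / 2"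
    using sum_refine_eq[of 0 "Suc i" P] \<open>P (- 1) = 0\<close> by (simp add: algebra_simps)
  also have "\<dots> = (lower_loss D (2 * m) (2 * i) t + lower_loss D (2 * m) (2 * i + 1) t) / 2"
    unfolding lower_loss_def P_def atLeastLessThanSuc_atLeastAtMost[symmetric]
    by (simp add: field_simps)
  finally show ?thesis .
qed

lemma upper_loss_le_refined:
  assumes "i \<le> m"
  shows "upper_loss D m i s
    \<le> (upper_loss D (2 * m) (2 * i) s + upper_loss D (2 * m) (2 * i + 1) s) / 2"
proof -
  define Q where "Q k = pospart (- bin_bias D (2 * m) k s)" for k
  have Q_last: "Q (int (2 * m + 1)) = 0"
    using bin_bias_eq_0_outside[of "int (2 * m + 1)" "2 * m" s] by (simp add: Q_def pospart_def)
  have ivl: "{i + 1..m} = {Suc i..<Suc m}" by auto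
  have "upper_loss D m i s
      \<le> (\<Sum>j\<in>{Suc i..<Suc m}. Q (2 * int j) + (Q (2 * int j - 1) + Q (2 * int j + 1)) / 2)"
    unfolding upper_loss_def Q_def ivl
    by (intro sum_mono) (subst bin_bias_refine, rule pospart_neg_refine_le)
  also have "\<dots> = (\<Sum>k\<in>{2 * i + 2..2 * m + 1}. Q (int k)) + Q (2 * int i + 1) / 2"
    using sum_refine_eq[of "Suc i" "Suc m" Q] assms Q_last
    by (simp add: atLeastLessThanSuc_atLeastAtMost algebra_simps)
  also have "\<dots> = (upper_loss D (2 * m) (2 * i) s + upper_loss D (2 * m) (2 * i + 1) s) / 2"
  proof -
    have "(\<Sum>k\<in>{2 * i + 1..2 * m}. Q (int k)) = (\<Sum>k\<in>{2 * i + 1..2 * m + 1}. Q (int k))"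
      using assms Q_last by (simp add: sum.cl_ivl_Suc)
    also have "\<dots> = Q (2 * int i + 1) + (\<Sum>k\<in>{2 * i + 2..2 * m + 1}. Q (int k))"
      using sum.atLeast_Suc_atMost[of "2 * i + 1" "2 * m + 1" "\<lambda>k. Q (int k)"] assms
      by (simp add: add.commute)
    finally have "(\<Sum>k\<in>{2 * i + 1..2 * m}. Q (int k))
        = Q (2 * int i + 1) + (\<Sum>k\<in>{2 * i + 2..2 * m + 1}. Q (int k))" .
    moreover have "(\<Sum>k\<in>{2 * i + 2..2 * m}. Q (int k)) = (\<Sum>k\<in>{2 * i + 2..2 * m + 1}. Q (int k))"
      using Q_last by (simp add: sum.cl_ivl_Suc)
    ultimately show ?thesis unfolding upper_loss_def Q_def by (simp add: field_simps)
  qed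
  finally show ?thesis .
qed

text \<open>The cut \<open>i = m + 1\<close> arises when the cut \<open>i = m\<close> at level \<open>m\<close> is refined.\<close>

lemma cut_loss_le_SCDL_m:
  assumes "i \<le> Suc m"
  shows "cut_loss D m i \<le> SCDL_m D m"
proof -
  have at_cut: "cut_loss D m i' \<le> SCDL_m D m" if "i' \<le> m" for i'
    unfolding SCDL_m_eq_Max_cut_loss using that by (intro Max_ge) auto
  show ?thesis
  proof (cases "i \<le> m")
    case True
    then show ?thesis by (rule at_cut)
  next
    case False
    then have i: "i = Suc m" using assms by simp
    have "lower_loss D m i (real (i + 1) / real m) = lower_loss D m m (real (m + 2) / real m)"
      using bin_bias_eq_0_outside[of "int (Suc m)" m] unfolding i lower_loss_def
      by (simp add: pospart_def)
    also have "\<dots> \<le> lower_loss D m m (real (m + 1) / real m)"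
      by (rule lower_loss_antimono) (simp add: divide_right_mono)
    finally have "cut_loss D m i \<le> cut_loss D m m"
      unfolding cut_loss_def by (simp add: upper_loss_def i)
    also have "\<dots> \<le> SCDL_m D m" by (rule at_cut) simp
    finally show ?thesis .
  qed
qed

lemma SCDL_m_le_double: "SCDL_m D m \<le> SCDL_m D (2 * m)"
proof -
  have "cut_loss D m i \<le> SCDL_m D (2 * m)" if "i \<le> m" for i
  proof -
    define t where "t = real (i + 1) / real m"
    define s where "s = real i / real m"
    define r where "r = real (2 * i + 1) / real (2 * m)"
    have "real (2 * i + 1 + 1) / real (2 * m) = t" "real (2 * i) / real (2 * m) = s"
      unfolding t_def s_def by (cases "m = 0"; simp add: field_simps)+
    then have "lower_loss D (2 * m) (2 * i) r + upper_loss D (2 * m) (2 * i) s \<le> SCDL_m D (2 * m)"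
      and "lower_loss D (2 * m) (2 * i + 1) t + upper_loss D (2 * m) (2 * i + 1) r \<le> SCDL_m D (2 * m)"
      using cut_loss_le_SCDL_m[of "2 * i" "2 * m"] cut_loss_le_SCDL_m[of "2 * i + 1" "2 * m"] that
      unfolding cut_loss_def r_def by simp_all
    moreover have "s \<le> r" "r \<le> t"
      unfolding r_def s_def t_def by (cases "m = 0"; simp add: field_simps)+
    then have "lower_loss D (2 * m) (2 * i) t \<le> lower_loss D (2 * m) (2 * i) r"
      and "upper_loss D (2 * m) (2 * i + 1) s \<le> upper_loss D (2 * m) (2 * i + 1) r"
      by (simp_all add: lower_loss_antimono upper_loss_mono)
    moreover have "cut_loss D m i = lower_loss D m i t + upper_loss D m i s"
      unfolding cut_loss_def t_def s_def ..
    ultimately show ?thesis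
      using lower_loss_le_refined[of m i t] upper_loss_le_refined[OF that, of s]
      by (simp add: field_simps)
  qed
  then show ?thesis unfolding SCDL_m_eq_Max_cut_loss[of m] by (subst Max_le_iff) auto
qed

lemma tent_integral_nonneg: "0 \<le> (\<integral>z. tent m j (fst z) \<partial>D)"
  by (simp add: tent_nonneg)

lemma pospart_bin_bias_le:
  assumes "0 \<le> t"
  shows "pospart (bin_bias D m j t) \<le> (\<integral>z. tent m j (fst z) \<partial>D)"
  using tent_integral_bounds[of m j] mult_nonneg_nonneg[OF assms tent_integral_nonneg[of m j]]
  unfolding bin_bias_eq pospart_def by simp

lemma pospart_neg_bin_bias_le:
  assumes "s \<le> 1"
  shows "pospart (- bin_bias D m j s) \<le> (\<integral>z. tent m j (fst z) \<partial>D)"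
  using tent_integral_bounds[of m j] mult_right_mono[OF assms tent_integral_nonneg[of m j]]
  unfolding bin_bias_eq pospart_def by simp

lemma cut_loss_le_2:
  assumes "i \<le> m"
  shows "cut_loss D m i \<le> 2"
proof -
  have "cut_loss D m i \<le> (\<Sum>j\<in>{0..i}. \<integral>z. tent m (int j) (fst z) \<partial>D)
      + (\<Sum>j\<in>{i + 1..m}. \<integral>z. tent m (int j) (fst z) \<partial>D)"
    unfolding cut_loss_def lower_loss_def upper_loss_def using assms
    by (intro add_mono sum_mono pospart_bin_bias_le pospart_neg_bin_bias_le) (auto simp: field_simps)
  also have "\<dots> = (\<integral>z. (\<Sum>j\<in>{0..m}. tent m (int j) (fst z)) \<partial>D)"
    using sum_split_at[OF assms] integrable_tent_mult[of m _ "\<lambda>_. 1"] by simp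
  also have "\<dots> \<le> (\<integral>z. 2 \<partial>D)"
    using integrable_tent_mult[of m _ "\<lambda>_. 1"] by (intro integral_mono) (auto simp: sum_tent_le)
  finally show ?thesis by (simp add: prob_space)
qed

lemma SCDL_m_le_2: "SCDL_m D m \<le> 2"
  unfolding SCDL_m_eq_Max_cut_loss by (subst Max_le_iff) (auto simp: cut_loss_le_2)

end

section \<open>Coupled forecasts\<close>

definition forecast_law ::
    "'a measure \<Rightarrow> ('a \<Rightarrow> real) \<Rightarrow> ('a \<Rightarrow> bool) \<Rightarrow> (real \<times> bool) measure" where
  "forecast_law M X Y = distr M (borel \<Otimes>\<^sub>M count_space UNIV) (\<lambda>x. (X x, Y x))"

locale forecast_coupling = prob_space M for M :: "'a measure" +
  fixes X1 X2 :: "'a \<Rightarrow> real" and Y :: "'a \<Rightarrow> bool"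
  assumes X1_measurable [measurable]: "X1 \<in> borel_measurable M"
    and X2_measurable [measurable]: "X2 \<in> borel_measurable M"
    and Y_measurable [measurable]: "Y \<in> measurable M (count_space UNIV)"
    and AE_X1: "AE x in M. X1 x \<in> {0..1}"
    and AE_X2: "AE x in M. X2 x \<in> {0..1}"
begin

lemma forecast_coupling_swap: "forecast_coupling M X2 X1 Y"
  by unfold_locales (fact X1_measurable X2_measurable Y_measurable AE_X1 AE_X2)+

lemma forecast_distr_law:
  assumes [measurable]: "X \<in> borel_measurable M" and "AE x in M. X x \<in> {0..1}"
  shows "forecast_distr (forecast_law M X Y)"
proof -
  have [measurable]: "(\<lambda>x. (X x, Y x)) \<in> measurable M (borel \<Otimes>\<^sub>M count_space UNIV)"
    by measurable
  show ?thesis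
    unfolding forecast_distr_def forecast_distr_axioms_def forecast_law_def
    using assms(2) by (auto simp: prob_space_distr AE_distr_iff)
qed

lemma bin_bias_law:
  assumes [measurable]: "X \<in> borel_measurable M"
  shows "bin_bias (forecast_law M X Y) m j t = (\<integral>x. tent m j (X x) * (of_bool (Y x) - t) \<partial>M)"
  unfolding bin_bias_def forecast_law_def by (subst integral_distr) simp_all

lemma integrable_bounded:
  fixes f :: "'a \<Rightarrow> real"
  assumes "f \<in> borel_measurable M" "\<And>x. \<bar>f x\<bar> \<le> B"
  shows "integrable M f"
  using assms by (intro integrable_const_bound[where B = B]) auto

lemma bin_bias_coupling_le:
  assumes "0 \<le> t" "t \<le> 2"
  shows "\<bar>bin_bias (forecast_law M X1 Y) m j t - bin_bias (forecast_law M X2 Y) m j t\<bar>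
    \<le> 2 * (\<integral>x. \<bar>tent m j (X1 x) - tent m j (X2 x)\<bar> \<partial>M)"
proof -
  have y: "\<bar>of_bool b - t\<bar> \<le> 2" for b using assms by (cases b) auto
  have "\<bar>tent m j p\<bar> * \<bar>of_bool b - t\<bar> \<le> 1 * 2" for p b
    using y tent_nonneg tent_le_1 by (intro mult_mono) auto
  then have int: "integrable M (\<lambda>x. tent m j (X x) * (of_bool (Y x) - t))"
    if [measurable]: "X \<in> borel_measurable M" for X
    by (intro integrable_bounded[where B = 2]) (simp_all add: abs_mult)
  have "\<bar>bin_bias (forecast_law M X1 Y) m j t - bin_bias (forecast_law M X2 Y) m j t\<bar>
      = \<bar>\<integral>x. (tent m j (X1 x) - tent m j (X2 x)) * (of_bool (Y x) - t) \<partial>M\<bar>"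
    unfolding bin_bias_law[OF X1_measurable] bin_bias_law[OF X2_measurable]
    using int[OF X1_measurable] int[OF X2_measurable] by (simp add: left_diff_distrib)
  also have "\<dots> \<le> (\<integral>x. \<bar>(tent m j (X1 x) - tent m j (X2 x)) * (of_bool (Y x) - t)\<bar> \<partial>M)"
    by (rule integral_abs_bound)
  also have "\<dots> \<le> (\<integral>x. 2 * \<bar>tent m j (X1 x) - tent m j (X2 x)\<bar> \<partial>M)"
  proof (rule integral_mono)
    show "integrable M (\<lambda>x. 2 * \<bar>tent m j (X1 x) - tent m j (X2 x)\<bar>)"
      using abs_tent_diff_le_1 by (intro integrable_bounded[where B = 2]) simp_all
    show "integrable M (\<lambda>x. \<bar>(tent m j (X1 x) - tent m j (X2 x)) * (of_bool (Y x) - t)\<bar>)"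
      using int[OF X1_measurable] int[OF X2_measurable]
      by (intro integrable_abs) (simp add: left_diff_distrib)
    fix x
    show "\<bar>(tent m j (X1 x) - tent m j (X2 x)) * (of_bool (Y x) - t)\<bar> \<le> 2 * \<bar>tent m j (X1 x) - tent m j (X2 x)\<bar>"
      using mult_left_mono[OF y[of "Y x"] abs_ge_zero[of "tent m j (X1 x) - tent m j (X2 x)"]]
      by (metis abs_mult mult.commute)
  qed
  finally show ?thesis by simp
qed

lemma integrable_dist: "integrable M (\<lambda>x. \<bar>X1 x - X2 x\<bar>)"
  using AE_X1 AE_X2 by (intro integrable_const_bound[where B = 1]) (auto elim!: AE_mp)

lemma dist_integral_le_1: "(\<integral>x. \<bar>X1 x - X2 x\<bar> \<partial>M) \<le> 1"
proof -
  have "(\<integral>x. \<bar>X1 x - X2 x\<bar> \<partial>M) \<le> (\<integral>x. 1 \<partial>M)"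
    using AE_X1 AE_X2 by (intro integral_mono_AE integrable_dist) (auto elim!: AE_mp)
  then show ?thesis by (simp add: prob_space)
qed

lemma sum_tent_gap_le:
  "(\<Sum>j\<in>{0..m}. \<integral>x. \<bar>tent m (int j) (X1 x) - tent m (int j) (X2 x)\<bar> \<partial>M)
    \<le> 4 * real m * (\<integral>x. \<bar>X1 x - X2 x\<bar> \<partial>M)"
proof -
  have gap: "integrable M (\<lambda>x. \<bar>tent m j (X1 x) - tent m j (X2 x)\<bar>)" for j
    using abs_tent_diff_le_1 by (intro integrable_bounded[where B = 1]) simp_all
  have "(\<Sum>j\<in>{0..m}. \<integral>x. \<bar>tent m (int j) (X1 x) - tent m (int j) (X2 x)\<bar> \<partial>M)
      = (\<integral>x. (\<Sum>j\<in>{0..m}. \<bar>tent m (int j) (X1 x) - tent m (int j) (X2 x)\<bar>) \<partial>M)"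
    using gap by simp
  also have "\<dots> \<le> (\<integral>x. 4 * real m * \<bar>X1 x - X2 x\<bar> \<partial>M)"
    using gap integrable_dist sum_tent_diff_le by (intro integral_mono) auto
  finally show ?thesis by simp
qed

lemma cut_loss_coupling_le:
  assumes "i \<le> m"
  shows "cut_loss (forecast_law M X1 Y) m i
    \<le> cut_loss (forecast_law M X2 Y) m i + 8 * real m * (\<integral>x. \<bar>X1 x - X2 x\<bar> \<partial>M)"
proof -
  let ?D1 = "forecast_law M X1 Y" and ?D2 = "forecast_law M X2 Y"
  define c where "c j = 2 * (\<integral>x. \<bar>tent m j (X1 x) - tent m j (X2 x)\<bar> \<partial>M)" for j
  have thresholds: "0 \<le> real (i + 1) / real m" "real (i + 1) / real m \<le> 2"
    "0 \<le> real i / real m" "real i / real m \<le> 2"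
    using assms by (cases "m = 0"; simp add: field_simps)+
  have "pospart (bin_bias ?D1 m j t) \<le> pospart (bin_bias ?D2 m j t) + c j"
    and "pospart (- bin_bias ?D1 m j t) \<le> pospart (- bin_bias ?D2 m j t) + c j"
    if "0 \<le> t" "t \<le> 2" for j t
    using pospart_le_add_abs[of "bin_bias ?D1 m j t" "bin_bias ?D2 m j t"]
      pospart_le_add_abs[of "- bin_bias ?D1 m j t" "- bin_bias ?D2 m j t"]
      bin_bias_coupling_le[OF that, of m j]
    unfolding c_def by linarith+
  then have "cut_loss ?D1 m i \<le> (\<Sum>j\<in>{0..i}. pospart (bin_bias ?D2 m (int j) (real (i + 1) / real m)) + c j)
      + (\<Sum>j\<in>{i + 1..m}. pospart (- bin_bias ?D2 m (int j) (real i / real m)) + c j)"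
    unfolding cut_loss_def lower_loss_def upper_loss_def using thresholds
    by (intro add_mono sum_mono) auto
  also have "\<dots> = cut_loss ?D2 m i + (\<Sum>j\<in>{0..m}. c j)"
    using sum_split_at[OF assms, of c]
    by (simp add: cut_loss_def lower_loss_def upper_loss_def sum.distrib)
  also have "(\<Sum>j\<in>{0..m}. c j) \<le> 8 * real m * (\<integral>x. \<bar>X1 x - X2 x\<bar> \<partial>M)"
    using sum_tent_gap_le[of m] unfolding c_def by (simp flip: sum_distrib_left)
  finally show ?thesis by simp
qed

lemma SCDL_m_coupling_le:
  "SCDL_m (forecast_law M X1 Y) m
    \<le> SCDL_m (forecast_law M X2 Y) m + 8 * real m * (\<integral>x. \<bar>X1 x - X2 x\<bar> \<partial>M)"
proof -
  interpret D1: forecast_distr "forecast_law M X1 Y" by (rule forecast_distr_law[OF X1_measurable AE_X1])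
  interpret D2: forecast_distr "forecast_law M X2 Y" by (rule forecast_distr_law[OF X2_measurable AE_X2])
  have "cut_loss (forecast_law M X1 Y) m i
      \<le> SCDL_m (forecast_law M X2 Y) m + 8 * real m * (\<integral>x. \<bar>X1 x - X2 x\<bar> \<partial>M)" if "i \<le> m" for i
    using cut_loss_coupling_le[OF that] D2.cut_loss_le_SCDL_m[of i m] that by simp
  then show ?thesis unfolding D1.SCDL_m_eq_Max_cut_loss by (subst Max_le_iff) auto
qed

lemma SCDL_square_le:
  "(SCDL (forecast_law M X1 Y))\<^sup>2
    \<le> (SCDL (forecast_law M X2 Y))\<^sup>2 + 610 * (\<integral>x. \<bar>X1 x - X2 x\<bar> \<partial>M)"
proof -
  interpret D2: forecast_distr "forecast_law M X2 Y" by (rule forecast_distr_law[OF X2_measurable AE_X2])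
  have "mono (\<lambda>k. SCDL_m (forecast_law M X2 Y) (2 ^ k))"
    unfolding mono_iff_le_Suc using D2.SCDL_m_le_double by simp
  moreover have "SCDL_m (forecast_law M X1 Y) (2 ^ k)
      \<le> SCDL_m (forecast_law M X2 Y) (2 ^ k) + 8 * 2 ^ k * (\<integral>x. \<bar>X1 x - X2 x\<bar> \<partial>M)" for k
    using SCDL_m_coupling_le[of "2 ^ k"] by simp
  ultimately have "(dyadic_inf (\<lambda>k. SCDL_m (forecast_law M X1 Y) (2 ^ k)))\<^sup>2
      \<le> (dyadic_inf (\<lambda>k. SCDL_m (forecast_law M X2 Y) (2 ^ k)))\<^sup>2
        + (2 + 4 * 8 * (1 + 2) + 8 * 8\<^sup>2) * (\<integral>x. \<bar>X1 x - X2 x\<bar> \<partial>M)"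
    using D2.SCDL_m_le_2 dist_integral_le_1 by (intro dyadic_inf_square_le) simp_all
  then show ?thesis unfolding SCDL_eq_dyadic_inf by simp
qed

lemma SCDL_square_diff_le:
  "\<bar>(SCDL (forecast_law M X1 Y))\<^sup>2 - (SCDL (forecast_law M X2 Y))\<^sup>2\<bar>
    \<le> 610 * (\<integral>x. \<bar>X1 x - X2 x\<bar> \<partial>M)"
proof -
  have "(SCDL (forecast_law M X2 Y))\<^sup>2
      \<le> (SCDL (forecast_law M X1 Y))\<^sup>2 + 610 * (\<integral>x. \<bar>X2 x - X1 x\<bar> \<partial>M)"
    by (rule forecast_coupling.SCDL_square_le[OF forecast_coupling_swap])
  then show ?thesis using SCDL_square_le by (simp add: abs_minus_commute abs_le_iff)
qed

lemma SCDL_diff_le: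
  "\<bar>SCDL (forecast_law M X1 Y) - SCDL (forecast_law M X2 Y)\<bar>
    \<le> 610 * sqrt (\<integral>x. \<bar>X1 x - X2 x\<bar> \<partial>M)"
proof -
  have "\<bar>SCDL (forecast_law M X1 Y) - SCDL (forecast_law M X2 Y)\<bar>
      \<le> sqrt \<bar>(SCDL (forecast_law M X1 Y))\<^sup>2 - (SCDL (forecast_law M X2 Y))\<^sup>2\<bar>"
    by (rule abs_diff_le_sqrt_abs_diff_squares) (simp_all add: SCDL_nonneg)
  also have "\<dots> \<le> sqrt 610 * sqrt (\<integral>x. \<bar>X1 x - X2 x\<bar> \<partial>M)"
    using SCDL_square_diff_le by (simp flip: real_sqrt_mult)
  also have "\<dots> \<le> 610 * sqrt (\<integral>x. \<bar>X1 x - X2 x\<bar> \<partial>M)"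
    using real_sqrt_le_mono[of 610 "610\<^sup>2"] by (intro mult_right_mono) simp_all
  finally show ?thesis .
qed

end

theorem theorem5p1:
  shows "\<exists>C>0. \<forall>J :: (real \<times> real \<times> bool) measure.
    prob_space J \<longrightarrow>
    sets J = sets (borel \<Otimes>\<^sub>M borel \<Otimes>\<^sub>M count_space UNIV) \<longrightarrow>
    (AE x in J. fst x \<in> {0..1} \<and> fst (snd x) \<in> {0..1}) \<longrightarrow>
    (let D1 = distr J (borel \<Otimes>\<^sub>M count_space UNIV) (\<lambda>x. (fst x, snd (snd x)));
         D2 = distr J (borel \<Otimes>\<^sub>M count_space UNIV) (\<lambda>x. (fst (snd x), snd (snd x)));
         E = (\<integral>x. \<bar>fst x - fst (snd x)\<bar> \<partial>J)
     in \<bar>(SCDL D1)\<^sup>2 - (SCDL D2)\<^sup>2\<bar> \<le> C * E \<and>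
        \<bar>SCDL D1 - SCDL D2\<bar> \<le> C * sqrt E)"
proof (intro exI[of _ 610] conjI allI impI)
  fix J :: "(real \<times> real \<times> bool) measure"
  assume J: "prob_space J" "sets J = sets (borel \<Otimes>\<^sub>M borel \<Otimes>\<^sub>M count_space UNIV)"
    "AE x in J. fst x \<in> {0..1} \<and> fst (snd x) \<in> {0..1}"
  have meas: "f \<in> measurable J N"
    if "f \<in> measurable (borel \<Otimes>\<^sub>M borel \<Otimes>\<^sub>M count_space UNIV) N" for f N
    using that measurable_cong_sets[OF J(2) refl] by blast
  have "forecast_coupling J fst (\<lambda>x. fst (snd x)) (\<lambda>x. snd (snd x))"
  proof (rule forecast_coupling.intro[OF J(1)], unfold_locales)
    show "fst \<in> borel_measurable J" "(\<lambda>x. fst (snd x)) \<in> borel_measurable J"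
      "(\<lambda>x. snd (snd x)) \<in> measurable J (count_space UNIV)"
      by (intro meas; measurable)+
    show "AE x in J. fst x \<in> {0..1}" "AE x in J. fst (snd x) \<in> {0..1}"
      using J(3) by (eventually_elim, simp)+
  qed
  then interpret forecast_coupling J fst "\<lambda>x. fst (snd x)" "\<lambda>x. snd (snd x)" .
  show "let D1 = distr J (borel \<Otimes>\<^sub>M count_space UNIV) (\<lambda>x. (fst x, snd (snd x)));
         D2 = distr J (borel \<Otimes>\<^sub>M count_space UNIV) (\<lambda>x. (fst (snd x), snd (snd x)));
         E = (\<integral>x. \<bar>fst x - fst (snd x)\<bar> \<partial>J)
     in \<bar>(SCDL D1)\<^sup>2 - (SCDL D2)\<^sup>2\<bar> \<le> 610 * E \<and> \<bar>SCDL D1 - SCDL D2\<bar> \<le> 610 * sqrt E"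
    using SCDL_square_diff_le SCDL_diff_le by (simp add: forecast_law_def)
qed (simp)

end
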